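(* Let $L$ be a finite lattice and $\varphi\in M_\infty(L)$. Then the function $U\mapsto B_\varphi(U)$ on $\mathcal L$ is the Möbius extension of $\varphi$.
   Context: $L$ is a finite lattice with meet $\wedge$. $\mathcal L$ is the set of nonempty up-sets of $L$ ordered by $U\preceq V$ iff $U\supseteq V$ (a distributive lattice with meet = union). For $a\in L$, $\langle a\rangle^*=\{x\in L:x\ge a\}$. Completely monotone: all successive differences $\nabla_{a_1,\dots,a_n}\varphi\ge0$, where $\nabla_a\varphi(x)=\varphi(x)-\varphi(x\wedge a)$ iterated. $M_1(L)$: nonnegative monotone functions on $L$; $M_\infty(L)$, $M_\infty(\mathcal L)$: nonnegative completely monotone functions on $L$, resp. on $(\mathcal L,\preceq)$. $\Pi(\Phi)(x)=\Phi(\langle x\rangle^* )$. For $\varphi\in M_1(L)$ and $U\in\mathcal L$, $B_\varphi(U)=\min\{\Phi(U):\Phi\in M_\infty(\mathcal L),\ \Pi(\Phi)=\varphi\}$. For $\varphi\in M_\infty(L)$ with Möbius inverse $f$ ($\varphi(x)=\sum_{y\le x}f(y)$), its Möbius extension is $\Phi(U)=\sum_{V\preceq U}F(V)$ where $F(\langle x\rangle^* )=f(x)$ and $F=0$ on non-principal up-sets. *)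

theory Defs
  imports Complex_Main
begin

text \<open>Nonempty up-sets of a lattice; the family \<open>\<L>\<close>. Its order is reverse inclusion,
  so its meet is union.\<close>
definition upsets :: "'a::order set set" where
  "upsets = {U. U \<noteq> {} \<and> (\<forall>x\<in>U. \<forall>y. x \<le> y \<longrightarrow> y \<in> U)}"

definition pup :: "'a::order \<Rightarrow> 'a set" where
  "pup a = {x. a \<le> x}"

fun nabla :: "('b \<Rightarrow> 'b \<Rightarrow> 'b) \<Rightarrow> 'b list \<Rightarrow> ('b \<Rightarrow> real) \<Rightarrow> 'b \<Rightarrow> real" where
  "nabla m [] \<phi> x = \<phi> x"
| "nabla m (a # as) \<phi> x = nabla m as \<phi> x - nabla m as \<phi> (m x a)"

definition compl_mono_on :: "'b set \<Rightarrow> ('b \<Rightarrow> 'b \<Rightarrow> 'b) \<Rightarrow> ('b \<Rightarrow> real) \<Rightarrow> bool" where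
  "compl_mono_on S m \<phi> \<longleftrightarrow>
     (\<forall>as x. as \<noteq> [] \<longrightarrow> set as \<subseteq> S \<longrightarrow> x \<in> S \<longrightarrow> nabla m as \<phi> x \<ge> 0)"

definition M_inf :: "('a::lattice \<Rightarrow> real) \<Rightarrow> bool" where
  "M_inf \<phi> \<longleftrightarrow> (\<forall>x. \<phi> x \<ge> 0) \<and> compl_mono_on UNIV inf \<phi>"

definition M_inf_up :: "('a::lattice set \<Rightarrow> real) \<Rightarrow> bool" where
  "M_inf_up \<Phi> \<longleftrightarrow> (\<forall>U\<in>upsets. \<Phi> U \<ge> 0) \<and> compl_mono_on upsets (\<union>) \<Phi>"

definition Pi_map :: "('a::order set \<Rightarrow> real) \<Rightarrow> 'a \<Rightarrow> real" where
  "Pi_map \<Phi> x = \<Phi> (pup x)"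

text \<open>B_phi(U) = min of Phi(U) over admissible Phi (here as an infimum; attainment is
  asserted separately in the theorem).\<close>
definition B :: "('a::lattice \<Rightarrow> real) \<Rightarrow> 'a set \<Rightarrow> real" where
  "B \<phi> U = Inf {\<Phi> U | \<Phi>. M_inf_up \<Phi> \<and> Pi_map \<Phi> = \<phi>}"

definition mobius_inv :: "('a::{finite,lattice} \<Rightarrow> real) \<Rightarrow> 'a \<Rightarrow> real" where
  "mobius_inv \<phi> = (THE f. \<forall>x. \<phi> x = (\<Sum>y\<in>{y. y \<le> x}. f y))"

definition mobF :: "('a::{finite,lattice} \<Rightarrow> real) \<Rightarrow> 'a set \<Rightarrow> real" where
  "mobF \<phi> V = (if \<exists>x. V = pup x then mobius_inv \<phi> (THE x. V = pup x) else 0)"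

definition mob_ext :: "('a::{finite,lattice} \<Rightarrow> real) \<Rightarrow> 'a set \<Rightarrow> real" where
  "mob_ext \<phi> U = (\<Sum>V\<in>{V\<in>upsets. U \<subseteq> V}. mobF \<phi> V)"

end

theory Submission
  imports Defs
begin

text \<open>The meet of a union of up-sets is the meet of their meets, so \<open>U \<mapsto> \<Sqinter>U\<close> is a
  homomorphism from \<open>(\<L>, \<union>)\<close> to \<open>(L, \<sqinter>)\<close> that sends \<open>\<langle>x\<rangle>*\<close> back to \<open>x\<close>; hence
  \<open>U \<mapsto> \<phi> (\<Sqinter>U)\<close> is a completely monotone extension of \<open>\<phi>\<close>. It is the least one: since
  \<open>U \<subseteq> \<langle>\<Sqinter>U\<rangle>*\<close>, monotonicity of any admissible \<open>\<Phi>\<close> gives \<open>\<Phi> U \<ge> \<Phi> \<langle>\<Sqinter>U\<rangle>* = \<phi> (\<Sqinter>U)\<close>.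
  In the Moebius extension the up-sets \<open>V \<supseteq> U\<close> carrying mass are exactly the \<open>\<langle>y\<rangle>*\<close>
  with \<open>y \<le> \<Sqinter>U\<close>, so it too evaluates to \<open>\<Sum>\<^bsub>y \<le> \<Sqinter>U\<^esub> f y = \<phi> (\<Sqinter>U)\<close>.\<close>

lemma card_strict_downset_less:
  fixes x y :: "'a::{finite,order}"
  assumes "y < x"
  shows "card {z. z < y} < card {z. z < x}"
  by (rule psubset_card_mono) (use assms in \<open>auto intro: less_trans\<close>)

lemma sum_downset_eq_add_sum_strict_downset:
  fixes x :: "'a::{finite,order}"
  shows "(\<Sum>y\<in>{y. y \<le> x}. f y) = f x + (\<Sum>y\<in>{y. y < x}. f y)"
proof -
  have "{y. y \<le> x} = insert x {y. y < x}" by auto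
  then show ?thesis by simp
qed

function mobius_rec :: "('a::{finite,order} \<Rightarrow> real) \<Rightarrow> 'a \<Rightarrow> real" where
  "mobius_rec \<phi> x = \<phi> x - (\<Sum>y\<in>{y. y < x}. mobius_rec \<phi> y)"
  by auto
termination
  by (relation "measure (\<lambda>(\<phi>, x). card {z. z < x})") (auto intro: card_strict_downset_less)

declare mobius_rec.simps [simp del]

lemma sum_downset_mobius_rec:
  fixes \<phi> :: "'a::{finite,order} \<Rightarrow> real"
  shows "(\<Sum>y\<in>{y. y \<le> x}. mobius_rec \<phi> y) = \<phi> x"
  by (simp add: sum_downset_eq_add_sum_strict_downset mobius_rec.simps[of \<phi> x])

lemma sum_downset_inj:
  fixes f g :: "'a::{finite,order} \<Rightarrow> real"
  assumes "\<And>x. (\<Sum>y\<in>{y. y \<le> x}. f y) = (\<Sum>y\<in>{y. y \<le> x}. g y)"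
  shows "f = g"
proof
  fix x
  show "f x = g x"
  proof (induction x rule: measure_induct_rule[where f = "\<lambda>x::'a. card {z. z < x}"])
    case (less x)
    then have "(\<Sum>y\<in>{y. y < x}. f y) = (\<Sum>y\<in>{y. y < x}. g y)"
      by (intro sum.cong) (auto intro: card_strict_downset_less)
    with assms[of x] show ?case by (simp add: sum_downset_eq_add_sum_strict_downset)
  qed
qed

lemma mobius_inv_eq_mobius_rec:
  fixes \<phi> :: "'a::{finite,lattice} \<Rightarrow> real"
  shows "mobius_inv \<phi> = mobius_rec \<phi>"
  unfolding mobius_inv_def
proof (rule the_equality)
  show "\<forall>x. \<phi> x = (\<Sum>y\<in>{y. y \<le> x}. mobius_rec \<phi> y)"
    by (simp add: sum_downset_mobius_rec)
  show "f = mobius_rec \<phi>" if "\<forall>x. \<phi> x = (\<Sum>y\<in>{y. y \<le> x}. f y)" for f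
    using that by (intro sum_downset_inj) (simp add: sum_downset_mobius_rec)
qed

lemma sum_downset_mobius_inv:
  fixes \<phi> :: "'a::{finite,lattice} \<Rightarrow> real"
  shows "(\<Sum>y\<in>{y. y \<le> x}. mobius_inv \<phi> y) = \<phi> x"
  by (simp add: mobius_inv_eq_mobius_rec sum_downset_mobius_rec)

lemma pup_in_upsets: "pup x \<in> upsets"
  unfolding upsets_def pup_def by (auto intro: order_trans)

lemma pup_inject: "pup (x::'a::order) = pup y \<longleftrightarrow> x = y"
  unfolding pup_def by (metis (mono_tags) antisym mem_Collect_eq order_refl)

lemma union_in_upsets: "U \<in> upsets \<Longrightarrow> V \<in> upsets \<Longrightarrow> U \<union> V \<in> upsets"
  unfolding upsets_def by blast

lemma subset_pup_iff_le_Inf_fin: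
  fixes U :: "'a::{finite,lattice} set"
  assumes "U \<in> upsets"
  shows "U \<subseteq> pup x \<longleftrightarrow> x \<le> Inf_fin U"
proof
  show "x \<le> Inf_fin U" if "U \<subseteq> pup x"
    using that assms by (intro Inf_fin.boundedI) (auto simp: upsets_def pup_def)
  show "U \<subseteq> pup x" if "x \<le> Inf_fin U"
    using that by (auto simp: pup_def intro: order_trans[OF _ Inf_fin.coboundedI])
qed

lemma Inf_fin_pup: "Inf_fin (pup (x::'a::{finite,lattice})) = x"
  using subset_pup_iff_le_Inf_fin[OF pup_in_upsets, of x]
  by (auto intro: antisym Inf_fin.coboundedI simp: pup_def)

lemma Inf_fin_union_upsets:
  fixes U V :: "'a::{finite,lattice} set"
  assumes "U \<in> upsets" "V \<in> upsets"
  shows "Inf_fin (U \<union> V) = inf (Inf_fin U) (Inf_fin V)"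
  using assms by (simp add: upsets_def Inf_fin.union)

lemma nabla_comp_hom:
  assumes closed: "\<And>x a. x \<in> S \<Longrightarrow> a \<in> S \<Longrightarrow> m x a \<in> S"
    and hom: "\<And>x a. x \<in> S \<Longrightarrow> a \<in> S \<Longrightarrow> h (m x a) = m' (h x) (h a)"
    and "x \<in> S" "set as \<subseteq> S"
  shows "nabla m as (\<phi> \<circ> h) x = nabla m' (map h as) \<phi> (h x)"
  using assms(3,4)
proof (induction as arbitrary: x)
  case (Cons a as)
  then show ?case by (simp add: closed hom)
qed simp

lemma compl_mono_on_comp_hom:
  assumes "compl_mono_on T m' \<phi>" "h ` S \<subseteq> T"
    and "\<And>x a. x \<in> S \<Longrightarrow> a \<in> S \<Longrightarrow> m x a \<in> S"
    and "\<And>x a. x \<in> S \<Longrightarrow> a \<in> S \<Longrightarrow> h (m x a) = m' (h x) (h a)"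
  shows "compl_mono_on S m (\<phi> \<circ> h)"
  unfolding compl_mono_on_def
proof (intro allI impI)
  fix as x
  assume "as \<noteq> []" "set as \<subseteq> S" "x \<in> S"
  moreover have "set (map h as) \<subseteq> T" "h x \<in> T"
    using assms(2) \<open>set as \<subseteq> S\<close> \<open>x \<in> S\<close> by auto
  ultimately have "nabla m' (map h as) \<phi> (h x) \<ge> 0"
    using assms(1) unfolding compl_mono_on_def by simp
  then show "nabla m as (\<phi> \<circ> h) x \<ge> 0"
    using nabla_comp_hom[where S = S and m = m and h = h and m' = m', OF assms(3,4) \<open>x \<in> S\<close> \<open>set as \<subseteq> S\<close>] by simp
qed

lemma compl_mono_on_antimono_meet:
  assumes "compl_mono_on S m \<Phi>" "x \<in> S" "a \<in> S"
  shows "\<Phi> (m x a) \<le> \<Phi> x"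
  using assms unfolding compl_mono_on_def by (auto dest: spec[of _ "[a]"])

lemma M_inf_up_comp_Inf_fin:
  fixes \<phi> :: "'a::{finite,lattice} \<Rightarrow> real"
  assumes "M_inf \<phi>"
  shows "M_inf_up (\<phi> \<circ> Inf_fin)"
  using assms unfolding M_inf_def M_inf_up_def
  by (auto intro: compl_mono_on_comp_hom union_in_upsets Inf_fin_union_upsets)

lemma Pi_map_comp_Inf_fin: "Pi_map (\<phi> \<circ> Inf_fin) = (\<phi> :: 'a::{finite,lattice} \<Rightarrow> real)"
  by (simp add: Pi_map_def Inf_fin_pup fun_eq_iff)

lemma le_admissible_extension:
  fixes \<Phi> :: "'a::{finite,lattice} set \<Rightarrow> real"
  assumes "M_inf_up \<Phi>" "U \<in> upsets"
  shows "Pi_map \<Phi> (Inf_fin U) \<le> \<Phi> U"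
proof -
  have "U \<union> pup (Inf_fin U) = pup (Inf_fin U)"
    using subset_pup_iff_le_Inf_fin[OF assms(2)] by blast
  then show ?thesis
    using compl_mono_on_antimono_meet[of upsets "(\<union>)" \<Phi> U "pup (Inf_fin U)"] assms
    by (simp add: M_inf_up_def Pi_map_def pup_in_upsets)
qed

lemma B_eq_Inf_fin:
  fixes \<phi> :: "'a::{finite,lattice} \<Rightarrow> real"
  assumes "M_inf \<phi>" "U \<in> upsets"
  shows "B \<phi> U = \<phi> (Inf_fin U)"
  unfolding B_def
proof (rule cInf_eq_minimum)
  show "\<phi> (Inf_fin U) \<in> {\<Phi> U |\<Phi>. M_inf_up \<Phi> \<and> Pi_map \<Phi> = \<phi>}"
    using M_inf_up_comp_Inf_fin[OF assms(1)] Pi_map_comp_Inf_fin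
    by (metis (mono_tags, lifting) comp_apply mem_Collect_eq)
  show "\<phi> (Inf_fin U) \<le> x" if "x \<in> {\<Phi> U |\<Phi>. M_inf_up \<Phi> \<and> Pi_map \<Phi> = \<phi>}" for x
    using that le_admissible_extension[OF _ assms(2)] by blast
qed

lemma mobF_pup: "mobF \<phi> (pup x) = mobius_inv \<phi> x"
  by (auto simp: mobF_def pup_inject)

lemma mob_ext_eq_Inf_fin:
  fixes \<phi> :: "'a::{finite,lattice} \<Rightarrow> real"
  assumes U: "U \<in> upsets"
  shows "mob_ext \<phi> U = \<phi> (Inf_fin U)"
proof -
  let ?P = "pup ` {x. x \<le> Inf_fin U}"
  have principal: "?P \<subseteq> {V \<in> upsets. U \<subseteq> V}"
    using subset_pup_iff_le_Inf_fin[OF U] pup_in_upsets by auto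
  have "mobF \<phi> V = 0" if "V \<in> {V \<in> upsets. U \<subseteq> V} - ?P" for V
    using that subset_pup_iff_le_Inf_fin[OF U] by (auto simp: mobF_def)
  then have "mob_ext \<phi> U = (\<Sum>V\<in>?P. mobF \<phi> V)"
    unfolding mob_ext_def by (intro sum.mono_neutral_right principal) auto
  also have "\<dots> = (\<Sum>x\<in>{x. x \<le> Inf_fin U}. mobius_inv \<phi> x)"
    by (subst sum.reindex) (auto simp: inj_on_def pup_inject mobF_pup)
  also have "\<dots> = \<phi> (Inf_fin U)"
    by (rule sum_downset_mobius_inv)
  finally show ?thesis .
qed

theorem proposition3p7:
  fixes \<phi> :: "'a::{finite,lattice} \<Rightarrow> real"
  assumes "M_inf \<phi>"
  shows "\<forall>U\<in>upsets.
           (\<exists>\<Phi>. M_inf_up \<Phi> \<and> Pi_map \<Phi> = \<phi> \<and> \<Phi> U = B \<phi> U)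
         \<and> B \<phi> U = mob_ext \<phi> U"
proof
  fix U :: "'a set"
  assume U: "U \<in> upsets"
  have "M_inf_up (\<phi> \<circ> Inf_fin) \<and> Pi_map (\<phi> \<circ> Inf_fin) = \<phi> \<and> (\<phi> \<circ> Inf_fin) U = B \<phi> U"
    using M_inf_up_comp_Inf_fin[OF assms] Pi_map_comp_Inf_fin B_eq_Inf_fin[OF assms U] by simp
  moreover have "B \<phi> U = mob_ext \<phi> U"
    using B_eq_Inf_fin[OF assms U] mob_ext_eq_Inf_fin[OF U] by simp
  ultimately show "(\<exists>\<Phi>. M_inf_up \<Phi> \<and> Pi_map \<Phi> = \<phi> \<and> \<Phi> U = B \<phi> U) \<and> B \<phi> U = mob_ext \<phi> U"
    by blast
qed

end
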